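(* Let $p\ne q$ be primes, $G=\mathbb{Z}_p^2\times\mathbb{Z}_q^2$, and $S\subseteq G$. Assume that for every nonzero $u\in\mathbb{Z}_p^2$ there is $x_u\in\mathbb{Z}_q^2$ with $\chi_{u+x_u}(S)=0$. Then there exist a nonnegative integer $c$ and a multiset $D\colon\mathbb{Z}_p^2\to\mathbb{N}$ such that $S_p=c\,1_{\mathbb{Z}_p^2}+qD$.
   Context: Elements of $G$ are written $a+b$ with $a\in\mathbb{Z}_p^2$, $b\in\mathbb{Z}_q^2$. For $w=u+v$ define $\chi_w(a+b)=\exp\big(2\pi i(\tfrac{u\cdot a}{p}+\tfrac{v\cdot b}{q})\big)$ and $\chi(S)=\sum_{s\in S}\chi(s)$. $S_p$ is the projection of $S$ to $\mathbb{Z}_p^2$ as a multiset: $S_p(a)=\#\{b\in\mathbb{Z}_q^2:a+b\in S\}$. *)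

theory Defs
  imports "HOL-Analysis.Analysis"
begin

definition Zn2 :: "nat \<Rightarrow> (nat \<times> nat) set" where
  "Zn2 n = {0..<n} \<times> {0..<n}"

definition dotp :: "nat \<times> nat \<Rightarrow> nat \<times> nat \<Rightarrow> nat" where
  "dotp u a = fst u * fst a + snd u * snd a"

text \<open>G = Z_p^2 x Z_q^2; an element a+b is the pair (a,b); a character index w=u+v is (u,v).\<close>
definition chi :: "nat \<Rightarrow> nat \<Rightarrow> (nat \<times> nat) \<times> (nat \<times> nat) \<Rightarrow> (nat \<times> nat) \<times> (nat \<times> nat) \<Rightarrow> complex" where
  "chi p q w g = exp (2 * of_real pi * \<i> *
      of_real (real (dotp (fst w) (fst g)) / real p + real (dotp (snd w) (snd g)) / real q))"

definition chiS :: "nat \<Rightarrow> nat \<Rightarrow> (nat \<times> nat) \<times> (nat \<times> nat) \<Rightarrow> ((nat \<times> nat) \<times> (nat \<times> nat)) set \<Rightarrow> complex" where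
  "chiS p q w S = (\<Sum>s\<in>S. chi p q w s)"

text \<open>Projection of S to Z_p^2 as a multiset (multiplicity function).\<close>
definition proj_p :: "nat \<Rightarrow> ((nat \<times> nat) \<times> (nat \<times> nat)) set \<Rightarrow> nat \<times> nat \<Rightarrow> nat" where
  "proj_p q S a = card {b \<in> Zn2 q. (a, b) \<in> S}"

end

theory Submission
  imports Defs "Jordan_Normal_Form.Char_Poly" "HOL-Computational_Algebra.Fundamental_Theorem_Algebra"
    "HOL-Number_Theory.Cong"
begin

text \<open>Let \<open>\<omega>\<close>, \<open>\<eta>\<close> be primitive \<open>p\<close>-th and \<open>q\<close>-th roots of unity and \<open>R = \<int>[\<zeta>\<^sub>p\<^sub>q]\<close>.
  If \<open>\<chi>\<^bsub>u+x\<^esub>(S) = 0\<close>, then \<open>\<chi>\<^bsub>u+0\<^esub>(S) = \<Sum>\<omega>\<^bsup>u\<cdot>a\<^esup>(1 - \<eta>\<^bsup>x\<cdot>b\<^esup>)\<close> lies in \<open>(1 - \<eta>)R\<close>.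
  These are the Fourier coefficients of \<open>S\<^sub>p\<close>, so Fourier inversion on \<open>\<int>\<^sub>p\<^sup>2\<close> gives
  \<open>p\<^sup>2 S\<^sub>p(a) \<in> |S| + (1 - \<eta>)R\<close> for every \<open>a\<close>. Since \<open>(1 - \<eta>)R \<inter> \<int> = q\<int>\<close>, all \<open>p\<^sup>2 S\<^sub>p(a)\<close>
  are congruent to \<open>|S|\<close> modulo \<open>q\<close>, and as \<open>q\<close> does not divide \<open>p\<^sup>2\<close> all values \<open>S\<^sub>p(a)\<close>
  are congruent modulo \<open>q\<close>.\<close>

unbundle no vec_syntax

definition unity_root :: "nat \<Rightarrow> complex" where
  "unity_root n = cis (2 * pi / real n)"

lemma unity_root_power: "unity_root n ^ k = cis (2 * pi * real k / real n)"
  unfolding unity_root_def Complex.DeMoivre by (simp add: mult_ac)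

lemma unity_root_power_eq_1_iff:
  assumes "n > 0"
  shows "unity_root n ^ k = 1 \<longleftrightarrow> n dvd k"
proof -
  have "unity_root n ^ k = exp (2 * of_real pi * \<i> * of_nat k / of_nat n)"
    unfolding unity_root_power cis_conv_exp by (simp add: mult_ac)
  also have "\<dots> = 1 \<longleftrightarrow> n dvd k"
    by (rule complex_root_unity_eq_1) (use assms in simp)
  finally show ?thesis .
qed

lemma unity_root_power_mod:
  assumes "n > 0"
  shows "unity_root n ^ (k mod n) = unity_root n ^ k"
proof -
  have "unity_root n ^ k = unity_root n ^ (n * (k div n) + k mod n)"
    by simp
  also have "\<dots> = (unity_root n ^ n) ^ (k div n) * unity_root n ^ (k mod n)"
    by (simp only: power_add power_mult)
  also have "unity_root n ^ n = 1"
    using assms by (simp add: unity_root_power_eq_1_iff)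
  finally show ?thesis by simp
qed

lemma unity_root_mult_power:
  assumes "m > 0"
  shows "unity_root (m * n) ^ m = unity_root n"
proof (cases "n = 0")
  case False
  with assms have "real m * (2 * pi / (real m * real n)) = 2 * pi / real n"
    by simp
  then show ?thesis
    unfolding unity_root_def Complex.DeMoivre by simp
qed (simp add: unity_root_def)

lemma root_of_unity_eq_unity_root_power:
  assumes "n > 0" and "x ^ n = 1"
  obtains k where "k < n" and "x = unity_root n ^ k"
  using Complex.bij_betw_roots_unity[OF assms(1)] assms(2)
  by (auto simp: bij_betw_def unity_root_power)

lemma sum_unity_root_powers:
  assumes "n > 0"
  shows "(\<Sum>j<n. unity_root n ^ (j * c)) = (if n dvd c then of_nat n else 0)"
proof (cases "n dvd c")
  case True
  then have "unity_root n ^ (j * c) = 1" for j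
    using assms by (simp add: unity_root_power_eq_1_iff)
  with True show ?thesis by simp
next
  case False
  have "unity_root n ^ c \<noteq> 1"
    using False assms by (simp add: unity_root_power_eq_1_iff)
  moreover have "(unity_root n ^ c) ^ n = 1"
    using assms by (simp flip: power_mult add: unity_root_power_eq_1_iff)
  ultimately have "(\<Sum>j<n. (unity_root n ^ c) ^ j) = 0"
    by (simp add: geometric_sum)
  also have "(\<Sum>j<n. (unity_root n ^ c) ^ j) = (\<Sum>j<n. unity_root n ^ (j * c))"
    by (intro sum.cong refl) (simp only: mult.commute[of _ c] power_mult)
  finally show ?thesis
    using False by simp
qed

lemma prime_root_of_unity_generates:
  fixes x y :: complex
  assumes "prime q" and "x ^ q = 1" and "x \<noteq> 1" and "y ^ q = 1"
  obtains m where "y = x ^ m"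
proof -
  have q: "q > 0" using assms(1) prime_gt_0_nat by blast
  obtain k where k: "k < q" "x = unity_root q ^ k"
    using root_of_unity_eq_unity_root_power[OF q assms(2)] .
  obtain j where j: "y = unity_root q ^ j"
    using root_of_unity_eq_unity_root_power[OF q assms(4)] .
  have "\<not> q dvd k"
    using assms(3) unfolding k(2) unity_root_power_eq_1_iff[OF q] .
  with assms(1) have "coprime q k"
    by (rule prime_imp_coprime)
  then have "coprime k q"
    by (rule coprime_commute[THEN iffD1])
  then obtain k' where "[k * k' = 1] (mod q)"
    using cong_solve_coprime_nat by auto
  then have "[k * k' * j = 1 * j] (mod q)"
    by (rule cong_scalar_right)
  then have kk'j: "(k * (k' * j)) mod q = j mod q"
    by (simp add: cong_def mult.assoc)
  have "x ^ (k' * j) = unity_root q ^ (k * (k' * j))"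
    unfolding k(2) by (simp only: power_mult)
  also have "\<dots> = y"
    unfolding j by (metis kk'j unity_root_power_mod[OF q])
  finally show ?thesis
    using that by blast
qed

definition cyclotomic_integers :: "nat \<Rightarrow> complex set" where
  "cyclotomic_integers N = range (\<lambda>c::nat \<Rightarrow> int. \<Sum>k<N. of_int (c k) * unity_root N ^ k)"

lemma cyclotomic_integersI:
  "z = (\<Sum>k<N. of_int (c k) * unity_root N ^ k) \<Longrightarrow> z \<in> cyclotomic_integers N"
  unfolding cyclotomic_integers_def by blast

lemma cyclotomic_integersE:
  assumes "z \<in> cyclotomic_integers N"
  obtains c where "z = (\<Sum>k<N. of_int (c k) * unity_root N ^ k)"
  using assms unfolding cyclotomic_integers_def by blast

lemma unity_root_power_in_cyclotomic_integers:
  assumes "N > 0"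
  shows "unity_root N ^ m \<in> cyclotomic_integers N"
proof (rule cyclotomic_integersI)
  let ?c = "\<lambda>k. if k = m mod N then 1 else 0 :: int"
  have "(\<Sum>k<N. of_int (?c k) * unity_root N ^ k) = (\<Sum>k<N. if k = m mod N then unity_root N ^ k else 0)"
    by (intro sum.cong refl) simp
  also have "\<dots> = unity_root N ^ (m mod N)"
    using assms by simp
  also have "\<dots> = unity_root N ^ m"
    by (rule unity_root_power_mod[OF assms])
  finally show "unity_root N ^ m = (\<Sum>k<N. of_int (?c k) * unity_root N ^ k)" ..
qed

lemma unity_root_power_in_cyclotomic_integers_dvd:
  assumes "N > 0" and "n dvd N"
  shows "unity_root n ^ k \<in> cyclotomic_integers N"
proof -
  obtain m where N: "N = m * n"
    using assms(2) by (metis dvd_def mult.commute)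
  then have "m > 0"
    using assms(1) by simp
  have "unity_root n ^ k = unity_root N ^ (m * k)"
    unfolding N power_mult unity_root_mult_power[OF \<open>m > 0\<close>] ..
  then show ?thesis
    using unity_root_power_in_cyclotomic_integers[OF assms(1)] by simp
qed

lemma one_in_cyclotomic_integers: "N > 0 \<Longrightarrow> 1 \<in> cyclotomic_integers N"
  using unity_root_power_in_cyclotomic_integers[of N 0] by simp

lemma zero_in_cyclotomic_integers: "0 \<in> cyclotomic_integers N"
  by (rule cyclotomic_integersI[where c = "\<lambda>_. 0"]) simp

lemma cyclotomic_integers_add:
  assumes "z \<in> cyclotomic_integers N" and "w \<in> cyclotomic_integers N"
  shows "z + w \<in> cyclotomic_integers N"
proof -
  obtain c d where "z = (\<Sum>k<N. of_int (c k) * unity_root N ^ k)"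
    and "w = (\<Sum>k<N. of_int (d k) * unity_root N ^ k)"
    using assms by (metis cyclotomic_integersE)
  then have "z + w = (\<Sum>k<N. of_int (c k + d k) * unity_root N ^ k)"
    by (simp add: sum.distrib distrib_right)
  then show ?thesis
    by (rule cyclotomic_integersI)
qed

lemma cyclotomic_integers_of_int_mult:
  assumes "z \<in> cyclotomic_integers N"
  shows "of_int a * z \<in> cyclotomic_integers N"
proof -
  obtain c where "z = (\<Sum>k<N. of_int (c k) * unity_root N ^ k)"
    using assms by (rule cyclotomic_integersE)
  then have "of_int a * z = (\<Sum>k<N. of_int (a * c k) * unity_root N ^ k)"
    by (simp add: sum_distrib_left mult.assoc)
  then show ?thesis
    by (rule cyclotomic_integersI)
qed

lemma cyclotomic_integers_sum:
  assumes "\<And>i. i \<in> A \<Longrightarrow> f i \<in> cyclotomic_integers N"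
  shows "(\<Sum>i\<in>A. f i) \<in> cyclotomic_integers N"
  using assms
proof (induction A rule: infinite_finite_induct)
  case (insert x F)
  then show ?case
    by (simp add: cyclotomic_integers_add)
qed (simp_all add: zero_in_cyclotomic_integers)

lemma cyclotomic_integers_mult_unity_root_power:
  assumes "N > 0" and "z \<in> cyclotomic_integers N"
  shows "z * unity_root N ^ m \<in> cyclotomic_integers N"
proof -
  obtain c where "z = (\<Sum>k<N. of_int (c k) * unity_root N ^ k)"
    using assms(2) by (rule cyclotomic_integersE)
  then have "z * unity_root N ^ m = (\<Sum>k<N. of_int (c k) * unity_root N ^ (k + m))"
    by (simp add: sum_distrib_right power_add mult.assoc)
  also have "\<dots> \<in> cyclotomic_integers N"
    by (intro cyclotomic_integers_sum cyclotomic_integers_of_int_mult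
        unity_root_power_in_cyclotomic_integers assms(1))
  finally show ?thesis .
qed

lemma cyclotomic_integers_mult:
  assumes "N > 0" and "z \<in> cyclotomic_integers N" and "w \<in> cyclotomic_integers N"
  shows "z * w \<in> cyclotomic_integers N"
proof -
  obtain d where "w = (\<Sum>k<N. of_int (d k) * unity_root N ^ k)"
    using assms(3) by (rule cyclotomic_integersE)
  then have "z * w = (\<Sum>k<N. of_int (d k) * (z * unity_root N ^ k))"
    by (simp add: sum_distrib_left mult.left_commute)
  also have "\<dots> \<in> cyclotomic_integers N"
    by (intro cyclotomic_integers_sum cyclotomic_integers_of_int_mult
        cyclotomic_integers_mult_unity_root_power assms(1,2))
  finally show ?thesis .
qed

lemma cyclotomic_integers_power:
  assumes "N > 0" and "z \<in> cyclotomic_integers N"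
  shows "z ^ m \<in> cyclotomic_integers N"
  by (induction m) (simp_all add: assms one_in_cyclotomic_integers cyclotomic_integers_mult)

lemma cyclotomic_integers_prod_mset:
  assumes "N > 0" and "\<And>z. z \<in># M \<Longrightarrow> z \<in> cyclotomic_integers N"
  shows "prod_mset M \<in> cyclotomic_integers N"
  using assms(2)
  by (induction M) (simp_all add: assms(1) one_in_cyclotomic_integers cyclotomic_integers_mult)

text \<open>Multiplication by \<open>z\<close> maps the vector \<open>(\<zeta>\<^sup>0, \<dots>, \<zeta>\<^bsup>N-1\<^esup>)\<close> to integer combinations of
  its entries, so \<open>z\<close> is an eigenvalue of an integer matrix.\<close>
lemma cyclotomic_integers_algebraic_int:
  assumes N: "N > 0" and z: "z \<in> cyclotomic_integers N"
  shows "algebraic_int z"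
proof -
  have "\<forall>j. \<exists>c::nat \<Rightarrow> int. z * unity_root N ^ j = (\<Sum>k<N. of_int (c k) * unity_root N ^ k)"
    using cyclotomic_integers_mult_unity_root_power[OF N z] cyclotomic_integersE by metis
  then obtain C where C: "\<And>j. z * unity_root N ^ j = (\<Sum>k<N. of_int (C j k) * unity_root N ^ k)"
    by metis
  define A :: "int mat" where "A = mat N N (\<lambda>(j, k). C j k)"
  define g :: "complex vec" where "g = vec N (\<lambda>k. unity_root N ^ k)"
  have A: "A \<in> carrier_mat N N"
    unfolding A_def by simp
  have B: "map_mat of_int A \<in> carrier_mat N N"
    using A by simp
  have "eigenvector (map_mat of_int A) g z"
    unfolding eigenvector_def
  proof (intro conjI)
    show "g \<in> carrier_vec (dim_row (map_mat of_int A))"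
      using A unfolding g_def by simp
    have "g $ 0 = 1"
      using N unfolding g_def by simp
    then show "g \<noteq> 0\<^sub>v (dim_row (map_mat of_int A))"
      using N A by auto
    show "map_mat of_int A *\<^sub>v g = z \<cdot>\<^sub>v g"
    proof (rule eq_vecI)
      fix j assume "j < dim_vec (z \<cdot>\<^sub>v g)"
      then have j: "j < N" unfolding g_def by simp
      have "(map_mat of_int A *\<^sub>v g) $ j = scalar_prod (row (map_mat of_int A) j) g"
        using A j by simp
      also have "\<dots> = (\<Sum>k<N. of_int (C j k) * unity_root N ^ k)"
        using j unfolding scalar_prod_def lessThan_atLeast0 by (auto simp: A_def g_def intro!: sum.cong)
      also have "\<dots> = (z \<cdot>\<^sub>v g) $ j"
        using j C[of j] unfolding g_def by simp
      finally show "(map_mat of_int A *\<^sub>v g) $ j = (z \<cdot>\<^sub>v g) $ j" .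
    qed (use A in \<open>simp add: g_def\<close>)
  qed
  then have "poly (char_poly (map_mat of_int A)) z = 0"
    using eigenvalue_root_char_poly[OF B] unfolding eigenvalue_def by blast
  then have "poly (map_poly of_int (char_poly A)) z = 0"
    by (simp add: of_int_hom.char_poly_hom[OF A])
  moreover have "lead_coeff (char_poly A) = 1"
    using degree_monic_char_poly[OF A] by simp
  ultimately show ?thesis
    unfolding algebraic_int_altdef_ipoly by blast
qed

lemma of_nat_eq_prod_one_minus_roots_of_unity:
  assumes "n > 0"
  obtains M :: "complex multiset"
  where "\<And>x. x \<in># M \<Longrightarrow> x ^ n = 1 \<and> x \<noteq> 1" and "of_nat n = (\<Prod>x\<in>#M. 1 - x)"
proof
  define f :: "complex poly" where "f = (\<Sum>i<n. monom 1 i)"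
  have poly_f: "poly f x = (\<Sum>i<n. x ^ i)" for x
    unfolding f_def by (simp add: poly_sum poly_monom)
  have coeff_f: "coeff f i = (if i < n then 1 else 0)" for i
    unfolding f_def by (simp add: coeff_sum)
  have "degree f = n - 1"
    by (intro antisym degree_le le_degree) (use assms in \<open>auto simp: coeff_f\<close>)
  then have "lead_coeff f = 1"
    using assms by (simp add: coeff_f)
  then have f: "f = (\<Prod>x\<in>#proots f. [:-x, 1:])"
    using complex_poly_decompose_multiset[of f] by simp
  have "of_nat n = poly f 1"
    by (simp add: poly_f)
  also have "\<dots> = (\<Prod>x\<in>#proots f. 1 - x)"
    by (subst f) (simp add: poly_prod_mset)
  finally show "of_nat n = (\<Prod>x\<in>#proots f. 1 - x)" .
  fix x assume "x \<in># proots f"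
  moreover have "f \<noteq> 0"
    using \<open>lead_coeff f = 1\<close> by auto
  ultimately have "poly f x = 0"
    by simp
  moreover have "(x - 1) * poly f x = x ^ n - 1"
    unfolding poly_f by (simp add: power_diff_1_eq)
  ultimately show "x ^ n = 1 \<and> x \<noteq> 1"
    using assms by (auto simp: poly_f)
qed

lemma one_minus_root_of_unity_factor:
  fixes \<eta> x :: complex
  assumes q: "prime q" and N: "N > 0"
    and \<eta>: "\<eta> ^ q = 1" "\<eta> \<noteq> 1" "\<eta> \<in> cyclotomic_integers N"
    and x: "x ^ q = 1 \<and> x \<noteq> 1"
  obtains u where "u \<in> cyclotomic_integers N" and "1 - \<eta> = (1 - x) * u"
proof -
  obtain m where m: "\<eta> = x ^ m"
    using prime_root_of_unity_generates[OF q] x \<eta>(1) by metis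
  obtain j where "x = \<eta> ^ j"
    using prime_root_of_unity_generates[OF q \<eta>(1,2)] x by metis
  then have "x \<in> cyclotomic_integers N"
    using N \<eta>(3) by (simp add: cyclotomic_integers_power)
  then have "(\<Sum>i<m. x ^ i) \<in> cyclotomic_integers N"
    using N by (intro cyclotomic_integers_sum cyclotomic_integers_power)
  moreover have "1 - \<eta> = (1 - x) * (\<Sum>i<m. x ^ i)"
    unfolding m by (rule one_diff_power_eq)
  ultimately show ?thesis
    using that by blast
qed

text \<open>\<open>(1 - \<eta>)\<int>[\<zeta>] \<inter> \<int> \<subseteq> q\<int>\<close>: every factor of \<open>q = \<Prod>(1 - x)\<close>, taken over the nontrivial
  \<open>q\<close>-th roots of unity \<open>x\<close>, divides \<open>1 - \<eta>\<close>. So \<open>(1 - \<eta>)\<^sup>m = q v\<close> with \<open>v\<close> an algebraic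
  integer, and \<open>n\<^sup>m / q\<close> is a rational algebraic integer.\<close>
lemma prime_dvd_if_multiple_of_one_minus_root_of_unity:
  fixes \<eta> r :: complex and n :: int
  assumes q: "prime q" and N: "N > 0"
    and \<eta>: "\<eta> ^ q = 1" "\<eta> \<noteq> 1" "\<eta> \<in> cyclotomic_integers N"
    and r: "r \<in> cyclotomic_integers N"
    and n: "of_int n = (1 - \<eta>) * r"
  shows "int q dvd n"
proof -
  obtain M :: "complex multiset" where M: "\<And>x. x \<in># M \<Longrightarrow> x ^ q = 1 \<and> x \<noteq> 1"
    and q_eq: "of_nat q = (\<Prod>x\<in>#M. 1 - x)"
    using of_nat_eq_prod_one_minus_roots_of_unity[OF prime_gt_0_nat[OF q]] by metis
  have "\<exists>u \<in> cyclotomic_integers N. 1 - \<eta> = (1 - x) * u" if "x \<in># M" for x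
    using one_minus_root_of_unity_factor[OF q N \<eta>] M[OF that] by metis
  then obtain u where u: "\<And>x. x \<in># M \<Longrightarrow> u x \<in> cyclotomic_integers N \<and> 1 - \<eta> = (1 - x) * u x"
    by metis
  define v where "v = (\<Prod>x\<in>#M. u x) * r ^ size M"
  have v: "v \<in> cyclotomic_integers N"
    unfolding v_def using N r u
    by (intro cyclotomic_integers_mult cyclotomic_integers_power cyclotomic_integers_prod_mset) auto
  have "(1 - \<eta>) ^ size M = (\<Prod>x\<in>#M. (1 - x) * u x)"
    using u by (simp flip: prod_mset_constant cong: image_mset_cong)
  also have "\<dots> = of_nat q * (\<Prod>x\<in>#M. u x)"
    by (simp add: prod_mset.distrib q_eq)
  finally have "of_int (n ^ size M) = of_nat q * v"
    unfolding v_def of_int_power n by (simp add: power_mult_distrib)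
  then have v_eq: "v = of_int (n ^ size M) / of_nat q"
    using q by (simp add: field_simps prime_gt_0_nat)
  have "v \<in> \<int>"
    using cyclotomic_integers_algebraic_int[OF N v]
    by (rule rational_algebraic_int_is_int) (simp add: v_eq)
  then obtain k where "v = of_int k"
    by (elim Ints_cases)
  then have "n ^ size M = int q * k"
    using \<open>of_int (n ^ size M) = of_nat q * v\<close> by (metis of_int_eq_iff of_int_mult of_int_of_nat_eq)
  then have "int q dvd n ^ size M"
    by simp
  then show ?thesis
    using q by (simp add: prime_dvd_power_iff prime_dvd_power)
qed

lemma chi_eq_unity_root_powers:
  "chi p q (u, x) s = unity_root p ^ dotp u (fst s) * unity_root q ^ dotp x (snd s)"
proof -
  have "unity_root p ^ dotp u (fst s) * unity_root q ^ dotp x (snd s)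
      = cis (2 * pi * real (dotp u (fst s)) / real p + 2 * pi * real (dotp x (snd s)) / real q)"
    unfolding unity_root_power cis_mult ..
  also have "\<dots> = exp (\<i> * of_real (2 * pi * real (dotp u (fst s)) / real p
      + 2 * pi * real (dotp x (snd s)) / real q))"
    by (rule cis_conv_exp)
  also have "\<dots> = chi p q (u, x) s"
    unfolding chi_def by (simp add: algebra_simps)
  finally show ?thesis ..
qed

lemma dvd_add_pred_mult_iff:
  fixes a b p :: nat
  assumes "a < p" and "b < p"
  shows "p dvd a + (p - 1) * b \<longleftrightarrow> a = b"
proof -
  have "a + (p - 1) * b + b = a + p * b"
    using assms by (cases p) auto
  then have "p dvd a + (p - 1) * b \<longleftrightarrow> [a + p * b = b] (mod p)"
    by (metis cong_add_rcancel_nat cong_0_iff add_0)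
  also have "\<dots> \<longleftrightarrow> a = b"
    using assms by (simp add: cong_def)
  finally show ?thesis .
qed

lemma sum_Zn2_unity_root_dotp:
  assumes "p > 0" and "a0 \<in> Zn2 p" and "a \<in> Zn2 p"
  shows "(\<Sum>u\<in>Zn2 p. unity_root p ^ ((p - 1) * dotp u a0 + dotp u a))
    = (if a = a0 then of_nat (p\<^sup>2) else 0)"
proof -
  define c1 where "c1 = fst a + (p - 1) * fst a0"
  define c2 where "c2 = snd a + (p - 1) * snd a0"
  have "(p - 1) * dotp u a0 + dotp u a = fst u * c1 + snd u * c2" for u
    unfolding dotp_def c1_def c2_def by (simp add: algebra_simps)
  then have "(\<Sum>u\<in>Zn2 p. unity_root p ^ ((p - 1) * dotp u a0 + dotp u a))
      = (\<Sum>i<p. \<Sum>j<p. unity_root p ^ (i * c1) * unity_root p ^ (j * c2))"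
    unfolding Zn2_def lessThan_atLeast0 by (simp add: sum.cartesian_product split_def power_add)
  also have "\<dots> = (\<Sum>i<p. unity_root p ^ (i * c1)) * (\<Sum>j<p. unity_root p ^ (j * c2))"
    by (simp add: sum_product)
  also have "\<dots> = (if p dvd c1 then of_nat p else 0) * (if p dvd c2 then of_nat p else 0)"
    unfolding sum_unity_root_powers[OF assms(1)] ..
  also have "p dvd c1 \<longleftrightarrow> fst a = fst a0"
    unfolding c1_def using assms by (intro dvd_add_pred_mult_iff) (auto simp: Zn2_def)
  also have "p dvd c2 \<longleftrightarrow> snd a = snd a0"
    unfolding c2_def using assms by (intro dvd_add_pred_mult_iff) (auto simp: Zn2_def)
  finally show ?thesis
    by (auto simp: prod_eq_iff power2_eq_square)
qed

lemma card_fiber_eq_proj_p: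
  assumes "S \<subseteq> A \<times> Zn2 q"
  shows "card {s \<in> S. fst s = a} = proj_p q S a"
proof -
  have "{s \<in> S. fst s = a} = Pair a ` {b \<in> Zn2 q. (a, b) \<in> S}"
    using assms by force
  then show ?thesis
    unfolding proj_p_def by (simp add: card_image inj_on_def)
qed

text \<open>\<open>\<chi>\<^bsub>u+0\<^esub>(S)\<close> is the Fourier coefficient of \<open>S\<^sub>p\<close> at \<open>u\<close>; the exponent \<open>(p - 1) * dotp u a0\<close>
  encodes \<open>-u\<cdot>a0\<close> without natural-number subtraction.\<close>
lemma proj_p_fourier_inversion:
  assumes "p > 0" and S: "S \<subseteq> Zn2 p \<times> Zn2 q" and a0: "a0 \<in> Zn2 p"
  shows "(\<Sum>u\<in>Zn2 p. unity_root p ^ ((p - 1) * dotp u a0) * chiS p q (u, (0, 0)) S)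
    = of_nat (p\<^sup>2 * proj_p q S a0)"
proof -
  have "(\<Sum>u\<in>Zn2 p. unity_root p ^ ((p - 1) * dotp u a0) * chiS p q (u, (0, 0)) S)
      = (\<Sum>s\<in>S. \<Sum>u\<in>Zn2 p. unity_root p ^ ((p - 1) * dotp u a0 + dotp u (fst s)))"
    unfolding chiS_def chi_eq_unity_root_powers sum_distrib_left
    by (subst sum.swap) (simp add: dotp_def power_add)
  also have "\<dots> = (\<Sum>s\<in>S. if fst s = a0 then of_nat (p\<^sup>2) else 0)"
    using S by (intro sum.cong refl sum_Zn2_unity_root_dotp assms(1) a0) auto
  also have "\<dots> = (\<Sum>s\<in>{s \<in> S. fst s = a0}. of_nat (p\<^sup>2))"
    using finite_subset[OF S] by (intro sum.inter_filter[symmetric]) (simp add: Zn2_def)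
  also have "\<dots> = of_nat (p\<^sup>2 * card {s \<in> S. fst s = a0})"
    by simp
  finally show ?thesis
    using card_fiber_eq_proj_p[OF S] by simp
qed

text \<open>\<open>\<chi>\<^bsub>u+0\<^esub>(S) - \<chi>\<^bsub>u+x\<^esub>(S) = \<Sum>\<omega>\<^bsup>u\<cdot>a\<^esup>(1 - \<eta>\<^bsup>x\<cdot>b\<^esup>)\<close>, and \<open>1 - \<eta>\<close> divides every \<open>1 - \<eta>\<^sup>k\<close>.\<close>
lemma chiS_multiple_of_one_minus_unity_root:
  assumes "p > 0" and "q > 0" and "chiS p q (u, x) S = 0"
  obtains r where "r \<in> cyclotomic_integers (p * q)"
    and "chiS p q (u, (0, 0)) S = (1 - unity_root q) * r"
proof
  let ?\<omega> = "unity_root p" and ?\<eta> = "unity_root q"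
  have pq: "p * q > 0"
    using assms by simp
  have \<omega>: "?\<omega> ^ m \<in> cyclotomic_integers (p * q)" for m
    using pq by (simp add: unity_root_power_in_cyclotomic_integers_dvd)
  have \<eta>: "?\<eta> ^ m \<in> cyclotomic_integers (p * q)" for m
    using pq by (simp add: unity_root_power_in_cyclotomic_integers_dvd)
  show "(\<Sum>s\<in>S. ?\<omega> ^ dotp u (fst s) * (\<Sum>i<dotp x (snd s). ?\<eta> ^ i)) \<in> cyclotomic_integers (p * q)"
    by (intro cyclotomic_integers_sum cyclotomic_integers_mult pq \<omega> \<eta>)
  have "chiS p q (u, (0, 0)) S = chiS p q (u, (0, 0)) S - chiS p q (u, x) S"
    using assms(3) by simp
  also have "\<dots> = (\<Sum>s\<in>S. ?\<omega> ^ dotp u (fst s) * (1 - ?\<eta> ^ dotp x (snd s)))"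
    unfolding chiS_def chi_eq_unity_root_powers
    by (simp add: dotp_def sum_subtractf algebra_simps)
  also have "\<dots> = (1 - ?\<eta>) * (\<Sum>s\<in>S. ?\<omega> ^ dotp u (fst s) * (\<Sum>i<dotp x (snd s). ?\<eta> ^ i))"
    by (simp add: one_diff_power_eq sum_distrib_left algebra_simps)
  finally show "chiS p q (u, (0, 0)) S
      = (1 - ?\<eta>) * (\<Sum>s\<in>S. ?\<omega> ^ dotp u (fst s) * (\<Sum>i<dotp x (snd s). ?\<eta> ^ i))" .
qed

lemma proj_p_scaled_cong_card:
  assumes p: "p > 0" and q: "prime q" and S: "S \<subseteq> Zn2 p \<times> Zn2 q"
    and vanishing: "\<forall>u\<in>Zn2 p. u \<noteq> (0, 0) \<longrightarrow> (\<exists>x\<in>Zn2 q. chiS p q (u, x) S = 0)"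
    and a0: "a0 \<in> Zn2 p"
  shows "[p\<^sup>2 * proj_p q S a0 = card S] (mod q)"
proof -
  let ?\<eta> = "unity_root q" and ?W = "\<lambda>u. unity_root p ^ ((p - 1) * dotp u a0)"
  have q1: "q > 1"
    using prime_gt_1_nat[OF q] .
  then have pq: "p * q > 0"
    using p by simp
  have "\<forall>u\<in>Zn2 p - {(0, 0)}. \<exists>r. r \<in> cyclotomic_integers (p * q)
      \<and> chiS p q (u, (0, 0)) S = (1 - ?\<eta>) * r"
  proof
    fix u assume u: "u \<in> Zn2 p - {(0, 0)}"
    obtain x where "chiS p q (u, x) S = 0"
      using vanishing u by auto
    then obtain r where "r \<in> cyclotomic_integers (p * q)" "chiS p q (u, (0, 0)) S = (1 - ?\<eta>) * r"
      by (rule chiS_multiple_of_one_minus_unity_root[OF p prime_gt_0_nat[OF q]])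
    then show "\<exists>r. r \<in> cyclotomic_integers (p * q) \<and> chiS p q (u, (0, 0)) S = (1 - ?\<eta>) * r"
      by blast
  qed
  then obtain r where r: "\<forall>u\<in>Zn2 p - {(0, 0)}.
      r u \<in> cyclotomic_integers (p * q) \<and> chiS p q (u, (0, 0)) S = (1 - ?\<eta>) * r u"
    by (rule bchoice[THEN exE])
  have "(0, 0) \<in> Zn2 p" and "finite (Zn2 p)"
    using p by (simp_all add: Zn2_def)
  have "of_nat (p\<^sup>2 * proj_p q S a0) = (\<Sum>u\<in>Zn2 p. ?W u * chiS p q (u, (0, 0)) S)"
    by (rule proj_p_fourier_inversion[OF p S a0, symmetric])
  also have "\<dots> = ?W (0, 0) * chiS p q ((0, 0), (0, 0)) S
      + (\<Sum>u\<in>Zn2 p - {(0, 0)}. ?W u * chiS p q (u, (0, 0)) S)"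
    by (rule sum.remove) fact+
  also have "?W (0, 0) * chiS p q ((0, 0), (0, 0)) S = of_nat (card S)"
    by (simp add: chiS_def chi_eq_unity_root_powers dotp_def)
  also have "(\<Sum>u\<in>Zn2 p - {(0, 0)}. ?W u * chiS p q (u, (0, 0)) S)
      = (1 - ?\<eta>) * (\<Sum>u\<in>Zn2 p - {(0, 0)}. ?W u * r u)"
    unfolding sum_distrib_left using r by (intro sum.cong) auto
  finally have "of_int (int (p\<^sup>2 * proj_p q S a0) - int (card S))
      = (1 - ?\<eta>) * (\<Sum>u\<in>Zn2 p - {(0, 0)}. ?W u * r u)"
    by simp
  moreover have "?\<eta> ^ q = 1" and "?\<eta> \<noteq> 1"
    using q1 unity_root_power_eq_1_iff[of q 1] by (simp_all add: unity_root_power_eq_1_iff)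
  moreover have "?\<eta> \<in> cyclotomic_integers (p * q)"
    using unity_root_power_in_cyclotomic_integers_dvd[OF pq, of q 1] by simp
  moreover have "(\<Sum>u\<in>Zn2 p - {(0, 0)}. ?W u * r u) \<in> cyclotomic_integers (p * q)"
    using r pq by (intro cyclotomic_integers_sum cyclotomic_integers_mult
        unity_root_power_in_cyclotomic_integers_dvd) auto
  ultimately have "int q dvd int (p\<^sup>2 * proj_p q S a0) - int (card S)"
    using prime_dvd_if_multiple_of_one_minus_root_of_unity[OF q pq] by blast
  then show ?thesis
    by (simp add: cong_iff_dvd_diff flip: cong_int_iff)
qed

theorem proposition4p7:
  fixes p q :: nat and S :: "((nat \<times> nat) \<times> (nat \<times> nat)) set"
  assumes "prime p" and "prime q" and "p \<noteq> q"
    and "S \<subseteq> Zn2 p \<times> Zn2 q"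
    and "\<forall>u\<in>Zn2 p. u \<noteq> (0, 0) \<longrightarrow> (\<exists>x\<in>Zn2 q. chiS p q (u, x) S = 0)"
  shows "\<exists>(c::nat) (D :: nat \<times> nat \<Rightarrow> nat).
           \<forall>a\<in>Zn2 p. proj_p q S a = c + q * D a"
proof -
  have p: "p > 0"
    using assms(1) prime_gt_0_nat by blast
  have "coprime (p\<^sup>2) q"
    using assms(1-3) by (simp add: primes_coprime)
  have cong: "[proj_p q S a = proj_p q S (0, 0)] (mod q)" if "a \<in> Zn2 p" for a
  proof -
    have "(0, 0) \<in> Zn2 p"
      using p by (simp add: Zn2_def)
    then have "[p\<^sup>2 * proj_p q S a = p\<^sup>2 * proj_p q S (0, 0)] (mod q)"
      using proj_p_scaled_cong_card[OF p assms(2,4,5)] that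
      by (blast intro: cong_trans cong_sym)
    then show ?thesis
      using \<open>coprime (p\<^sup>2) q\<close> by (simp add: cong_mult_lcancel_nat)
  qed
  show ?thesis
  proof (intro exI ballI)
    fix a assume "a \<in> Zn2 p"
    then have "proj_p q S a mod q = proj_p q S (0, 0) mod q"
      using cong unfolding cong_def by blast
    then show "proj_p q S a = proj_p q S (0, 0) mod q + q * (proj_p q S a div q)"
      using mod_mult_div_eq[of "proj_p q S a" q] by simp
  qed
qed

end
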